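(* Under either the overlap preference model or the cost preference model, for no $k\in\mathbb{N}$ is the pair $\langle R,F\rangle$ U-FSSP-A, where $R$ is the $k$-equal-representation shortlisting rule and $F$ is either the greedy-approval rule or the approval-maximising rule.
   Context: Throughout, $\mathbb{N}=\{1,2,3,\dots\}$. Let $\mathbb{P}=\{p_1,\dots,p_m\}$ be a finite set of projects, $c:\mathbb{P}\to\mathbb{N}$ a cost function with $c(P)=\sum_{p\in P}c(p)$, $B\in\mathbb{N}$ a budget with $c(p)\le B$ for all $p$; agents $\mathcal{N}=\{1,\dots,n\}$. Tie-breaking: for nonempty $P\subseteq\mathbb{P}$, $T(P)$ is its lowest-index project; for a nonempty family $\mathfrak{P}$ of subsets of $\mathbb{P}$, $T(\mathfrak{P})$ is the unique $P\in\mathfrak{P}$ such that for all $P'\in\mathfrak{P}\setminus\{P\}$ the lowest-index project of $(P\setminus P')\cup(P'\setminus P)$ lies in $P$; for a weak order $\ge$ on $\mathbb{P}$, $T(\ge)$ is the strict order obtained by ordering each indifference class by increasing index. Greedy selection $\mathit{GREED}(P,\gg)$, for $P\subseteq\mathbb{P}$ and a strict linear order $\gg$ on $P$, examines projects in the order $\gg$ and selects a project iff doing so keeps the total cost of selected projects at most $B$. Shortlisting stage: shortlisting instance $I=\langle\mathbb{P},c,B\rangle$; shortlisting profile $\boldsymbol{P}=(P_1,\dots,P_n)$, $P_i\subseteq\mathbb{P}$, $\bigcup\boldsymbol{P}=P_1\cup\dots\cup P_n$; $(\boldsymbol{P}_{-i},P_i')$ replaces $P_i$ by $P_i'$. The $k$-equal-representation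 shortlisting rule returns $R(I,\boldsymbol{P})=T\big(\operatorname*{argmax}_{P\subseteq\bigcup\boldsymbol{P},\ c(P)\le kB}\sum_{i\in\mathcal{N}}\sum_{\ell=0}^{|P_i\cap P|}n^{-\ell}\big)$. Each agent $i$ has an awareness set $C_i\subseteq\mathbb{P}$; $\boldsymbol{C}=(C_1,\dots,C_n)$. Allocation stage: allocation instance $I=\langle\mathcal{P},c,B\rangle$, $\mathcal{P}\subseteq\mathbb{P}$; profile $\boldsymbol{A}=(A_1,\dots,A_n)$, $A_i\subseteq\mathcal{P}$; $n_p^{\boldsymbol{A}}=|\{i:p\in A_i\}|$; $p\ge_{\mathit{app}}^{\boldsymbol{A}}p'$ iff $n_p^{\boldsymbol{A}}\ge n_{p'}^{\boldsymbol{A}}$; $\mathcal{A}(I)$ is the set of $A\subseteq\mathcal{P}$ with $c(A)\le B$. Greedy-approval rule: $F(I,\boldsymbol{A})=\mathit{GREED}(\mathcal{P},T(\ge_{\mathit{app}}^{\boldsymbol{A}}))$. Approval-maximising rule: $F(I,\boldsymbol{A})=T(\operatorname*{argmax}_{A\in\mathcal{A}(I)}\sum_{p\in A}n_p^{\boldsymbol{A}})$. Preferences: each agent $i$ has a strict linear order $\rhd_i$ on $\mathbb{P}$; $\mathit{top}_i(\mathcal{P})=\mathit{GREED}(\mathcal{P},\rhd_i|_{\mathcal{P}})$, $\boldsymbol{top}(\mathcal{P})=(\mathit{top}_1(\mathcal{P}),\dots,\mathit{top}_n(\mathcal{P}))$. For $P\subseteq\mathbb{P}$: overlap model $A\succeq_P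 A'$ iff $|A\cap P|\ge|A'\cap P|$; cost model $A\succeq_P A'$ iff $c(A\cap P)\ge c(A'\cap P)$; $\succ_P$ its strict part. $\mathit{best}(\succ,\mathfrak{P})$ is the set of elements of $\mathfrak{P}$ undominated w.r.t. $\succ$. Best response: for $I=\langle\mathcal{P},c,B\rangle$, profile $\boldsymbol{A}$, agent $i$: $A_i^\star(I,\boldsymbol{A})=T(\mathit{best}(\succ_{\mathit{top}_i(\mathcal{P})},\{F(I,(\boldsymbol{A}_{-i},A_i'))\mid A_i'\subseteq\mathcal{P}\}))$ and $F^\star(I,\boldsymbol{A})=F(I,(\boldsymbol{A}_{-i},A_i^\star(I,\boldsymbol{A})))$. Anticipative manipulation: given $R,F$, shortlisting instance $I_1$, profile $\boldsymbol{P}$, agent $i$, $P_i'\subseteq\mathbb{P}$, let $\mathcal{P}=R(I_1,\boldsymbol{P})$, $\mathcal{P}'=R(I_1,(\boldsymbol{P}_{-i},P_i'))$, $I_2=\langle\mathcal{P},c,B\rangle$, $I_2'=\langle\mathcal{P}',c,B\rangle$, $Q=\mathit{top}_i(\mathcal{P}\cup\mathcal{P}')$. $P_i'$ is a successful anticipative manipulation if $F^\star(I_2',\boldsymbol{top}(\mathcal{P}'))\succ_Q F^\star(I_2,\boldsymbol{top}(\mathcal{P}))$. U-FSSP-A: for a preference model, $\langle R,F\rangle$ is U-FSSP-A if for every shortlisting instance, awareness profile $\boldsymbol{C}$, shortlisting profile $\boldsymbol{P}$ with $P_{i'}\subseteq C_{i'}$ for all $i'$, and agent $i$, there is no $P_i'\subseteq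 C_i\cup\bigcup\boldsymbol{P}$ such that submitting $P_i'$ instead of $\mathit{top}_i(C_i\cup\bigcup\boldsymbol{P})$ (i.e., going from $(\boldsymbol{P}_{-i},\mathit{top}_i(C_i\cup\bigcup\boldsymbol{P}))$ to $(\boldsymbol{P}_{-i},P_i')$) is a successful anticipative manipulation for $i$. *)

theory Defs
  imports Complex_Main "HOL-Library.Product_Lexorder"
begin

(* Projects p_1..p_m are represented by their indices 1..m (so "lowest index" = Min);
   agents are 1..n. Profiles are functions from agents to sets of projects. *)

definition tie_fam :: "nat set set \<Rightarrow> nat set" where
  "tie_fam Fam = (THE P. P \<in> Fam \<and>
      (\<forall>P'\<in>Fam. P' \<noteq> P \<longrightarrow> Min ((P - P') \<union> (P' - P)) \<in> P))"

fun greed_aux :: "(nat \<Rightarrow> nat) \<Rightarrow> nat \<Rightarrow> nat list \<Rightarrow> nat set \<Rightarrow> nat set" where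
  "greed_aux c B [] S = S"
| "greed_aux c B (x # xs) S =
     greed_aux c B xs (if sum c (insert x S) \<le> B then insert x S else S)"

definition greed :: "(nat \<Rightarrow> nat) \<Rightarrow> nat \<Rightarrow> nat list \<Rightarrow> nat set" where
  "greed c B xs = greed_aux c B xs {}"

definition eqrep_score :: "nat \<Rightarrow> (nat \<Rightarrow> nat set) \<Rightarrow> nat set \<Rightarrow> real" where
  "eqrep_score n Ps P = (\<Sum>i\<in>{1..n}. \<Sum>l\<in>{0..card (Ps i \<inter> P)}. (1 / real n) ^ l)"

definition shortlist_R :: "nat \<Rightarrow> nat \<Rightarrow> (nat \<Rightarrow> nat) \<Rightarrow> nat \<Rightarrow> (nat \<Rightarrow> nat set) \<Rightarrow> nat set" where
  "shortlist_R k n c B Ps =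
    (let U = (\<Union>i\<in>{1..n}. Ps i);
         feas = {P. P \<subseteq> U \<and> sum c P \<le> k * B}
     in tie_fam {P \<in> feas. \<forall>P'\<in>feas. eqrep_score n Ps P' \<le> eqrep_score n Ps P})"

definition napp :: "nat \<Rightarrow> (nat \<Rightarrow> nat set) \<Rightarrow> nat \<Rightarrow> nat" where
  "napp n A p = card {i \<in> {1..n}. p \<in> A i}"

(* T(>=_app): decreasing approval count, ties by increasing index *)
definition greedy_approval :: "nat \<Rightarrow> (nat \<Rightarrow> nat) \<Rightarrow> nat \<Rightarrow> nat set \<Rightarrow> (nat \<Rightarrow> nat set) \<Rightarrow> nat set" where
  "greedy_approval n c B Pc A =
     greed c B (sort_key (\<lambda>p. (- int (napp n A p), p)) (sorted_list_of_set Pc))"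

definition approval_max :: "nat \<Rightarrow> (nat \<Rightarrow> nat) \<Rightarrow> nat \<Rightarrow> nat set \<Rightarrow> (nat \<Rightarrow> nat set) \<Rightarrow> nat set" where
  "approval_max n c B Pc A =
     (let feas = {X. X \<subseteq> Pc \<and> sum c X \<le> B}
      in tie_fam {X \<in> feas. \<forall>Y\<in>feas. (\<Sum>p\<in>Y. napp n A p) \<le> (\<Sum>p\<in>X. napp n A p)})"

text \<open>Preferences: agent j's strict linear order is the list pref j (most preferred first).\<close>
definition top :: "(nat \<Rightarrow> nat) \<Rightarrow> nat \<Rightarrow> (nat \<Rightarrow> nat list) \<Rightarrow> nat \<Rightarrow> nat set \<Rightarrow> nat set" where
  "top c B pref j Pc = greed c B (filter (\<lambda>p. p \<in> Pc) (pref j))"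

datatype pmodel = Overlap | CostModel

(* spref M c Q X Y  means  X \<succ>_Q Y *)
definition spref :: "pmodel \<Rightarrow> (nat \<Rightarrow> nat) \<Rightarrow> nat set \<Rightarrow> nat set \<Rightarrow> nat set \<Rightarrow> bool" where
  "spref M c Q X Y = (case M of
      Overlap \<Rightarrow> card (Y \<inter> Q) < card (X \<inter> Q)
    | CostModel \<Rightarrow> sum c (Y \<inter> Q) < sum c (X \<inter> Q))"

definition best :: "pmodel \<Rightarrow> (nat \<Rightarrow> nat) \<Rightarrow> nat set \<Rightarrow> nat set set \<Rightarrow> nat set set" where
  "best M c Q Fam = {X \<in> Fam. \<not> (\<exists>Y\<in>Fam. spref M c Q Y X)}"

type_synonym alloc_rule =
  "nat \<Rightarrow> (nat \<Rightarrow> nat) \<Rightarrow> nat \<Rightarrow> nat set \<Rightarrow> (nat \<Rightarrow> nat set) \<Rightarrow> nat set"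

definition best_resp :: "pmodel \<Rightarrow> alloc_rule \<Rightarrow> nat \<Rightarrow> (nat \<Rightarrow> nat) \<Rightarrow> nat \<Rightarrow>
    (nat \<Rightarrow> nat list) \<Rightarrow> nat \<Rightarrow> nat set \<Rightarrow> (nat \<Rightarrow> nat set) \<Rightarrow> nat set" where
  "best_resp M F n c B pref i Pc A =
     tie_fam (best M c (top c B pref i Pc) {F n c B Pc (A(i := A')) | A'. A' \<subseteq> Pc})"

definition Fstar :: "pmodel \<Rightarrow> alloc_rule \<Rightarrow> nat \<Rightarrow> (nat \<Rightarrow> nat) \<Rightarrow> nat \<Rightarrow>
    (nat \<Rightarrow> nat list) \<Rightarrow> nat \<Rightarrow> nat set \<Rightarrow> (nat \<Rightarrow> nat set) \<Rightarrow> nat set" where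
  "Fstar M F n c B pref i Pc A = F n c B Pc (A(i := best_resp M F n c B pref i Pc A))"

definition successful_antic :: "pmodel \<Rightarrow> nat \<Rightarrow> alloc_rule \<Rightarrow> nat \<Rightarrow> (nat \<Rightarrow> nat) \<Rightarrow> nat \<Rightarrow>
    (nat \<Rightarrow> nat list) \<Rightarrow> nat \<Rightarrow> (nat \<Rightarrow> nat set) \<Rightarrow> nat set \<Rightarrow> bool" where
  "successful_antic M k F n c B pref i Ps Pi' =
    (let Pc = shortlist_R k n c B Ps;
         Pc' = shortlist_R k n c B (Ps(i := Pi'));
         Q = top c B pref i (Pc \<union> Pc')
     in spref M c Q (Fstar M F n c B pref i Pc' (\<lambda>j. top c B pref j Pc'))
                    (Fstar M F n c B pref i Pc (\<lambda>j. top c B pref j Pc)))"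

definition U_FSSP_A :: "pmodel \<Rightarrow> nat \<Rightarrow> alloc_rule \<Rightarrow> bool" where
  "U_FSSP_A M k F =
    (\<forall>(m::nat) (n::nat) (c::nat \<Rightarrow> nat) (B::nat) (pref::nat \<Rightarrow> nat list)
        (C::nat \<Rightarrow> nat set) (Ps::nat \<Rightarrow> nat set) (i::nat).
       (1 \<le> B \<and> (\<forall>p\<in>{1..m}. 1 \<le> c p \<and> c p \<le> B)
        \<and> (\<forall>j\<in>{1..n}. distinct (pref j) \<and> set (pref j) = {1..m})
        \<and> (\<forall>j\<in>{1..n}. C j \<subseteq> {1..m} \<and> Ps j \<subseteq> C j)
        \<and> i \<in> {1..n})
       \<longrightarrow> \<not> (\<exists>Pi'. Pi' \<subseteq> C i \<union> (\<Union>j\<in>{1..n}. Ps j) \<and>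
              successful_antic M k F n c B pref i
                (Ps(i := top c B pref i (C i \<union> (\<Union>j\<in>{1..n}. Ps j)))) Pi'))"

end

theory Submission
  imports Defs
begin

(* Both counterexamples live on instances where every project fits the budget but no two do.
   There each allocation rule, and for k = 1 also the shortlisting rule, simply elects the
   project with most approvals (nominations), ties going to the lowest index.

   k = 1 (unit costs, B = 1): agent 1's truthful nomination 3 ties with agent 2's nomination 2
   and loses on index, so project 2 is funded; nominating 1 instead wins that tie, and agent 1
   prefers 1 to 2.

   k >= 2 (costs 2, B = 3): all nominations fit into the shortlist. Truthfully the shortlist is
   {1, 2}, where agents 2 and 3 both approve 2. By also nominating 3, agent 1 lets agent 2 switch
   to 3, which leaves a three-way tie of single approvals that her own vote breaks for 1. *)

lemma tie_fam_eqI: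
  assumes "\<forall>P\<in>Fam. finite P" and "X \<in> Fam"
    and "\<forall>P\<in>Fam. P \<noteq> X \<longrightarrow> Min (sym_diff X P) \<in> X"
  shows "tie_fam Fam = X"
  unfolding tie_fam_def
proof (rule the_equality)
  fix P assume P: "P \<in> Fam \<and> (\<forall>P'\<in>Fam. P' \<noteq> P \<longrightarrow> Min (sym_diff P P') \<in> P)"
  show "P = X"
  proof (rule ccontr)
    assume "P \<noteq> X"
    let ?D = "sym_diff X P"
    have "Min ?D \<in> X" using assms(3) P \<open>P \<noteq> X\<close> by blast
    moreover have "Min ?D \<in> P" using P assms(2) \<open>P \<noteq> X\<close> by (metis sup_commute)
    moreover have "Min ?D \<in> ?D" using assms(1,2) P \<open>P \<noteq> X\<close> by (intro Min_in) auto
    ultimately show False by blast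
  qed
qed (use assms in blast)

lemma tie_fam_singleton: "finite X \<Longrightarrow> tie_fam {X} = X"
  by (rule tie_fam_eqI) auto

lemma tie_fam_lowest_singleton:
  assumes "\<forall>P\<in>Fam. \<exists>q. P \<subseteq> {q}" and "{p} \<in> Fam" and "\<forall>q. {q} \<in> Fam \<longrightarrow> p \<le> q"
  shows "tie_fam Fam = {p}"
proof (rule tie_fam_eqI)
  show "\<forall>P\<in>Fam. finite P" using assms(1) finite_subset by blast
  show "\<forall>P\<in>Fam. P \<noteq> {p} \<longrightarrow> Min (sym_diff {p} P) \<in> {p}"
  proof (intro ballI impI)
    fix P assume "P \<in> Fam" "P \<noteq> {p}"
    then consider "P = {}" | q where "P = {q}" "q \<noteq> p" "p \<le> q"
      using assms(1,3) by (metis subset_singletonD)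
    then show "Min (sym_diff {p} P) \<in> {p}"
      by cases (auto simp: insert_Diff_if min_def)
  qed
qed (use assms in blast)

definition one_project_budget :: "(nat \<Rightarrow> nat) \<Rightarrow> nat \<Rightarrow> nat set \<Rightarrow> bool" where
  "one_project_budget c b S \<longleftrightarrow>
     (\<forall>p\<in>S. c p \<le> b) \<and> (\<forall>p\<in>S. \<forall>q\<in>S. p \<noteq> q \<longrightarrow> b < c p + c q)"

lemma one_project_budget_subset_singleton:
  assumes "finite S" "one_project_budget c b S" "X \<subseteq> S" "sum c X \<le> b"
  shows "\<exists>q. X \<subseteq> {q}"
proof (rule ccontr)
  assume "\<nexists>q. X \<subseteq> {q}"
  then obtain p q where "p \<in> X" "q \<in> X" "p \<noteq> q" by blast
  moreover have "finite X" using assms(1,3) finite_subset by blast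
  ultimately have "c p + c q \<le> sum c X"
    using sum_mono2[of X "{p, q}" c] by simp
  then show False using assms(2-4) \<open>p \<in> X\<close> \<open>q \<in> X\<close> \<open>p \<noteq> q\<close>
    unfolding one_project_budget_def by force
qed

lemma tie_fam_argmax_one_project:
  fixes f :: "nat set \<Rightarrow> 'a::linorder"
  assumes "finite S" "one_project_budget c b S" "p \<in> S"
    and "f {} \<le> f {p}" and "\<forall>q\<in>S. f {q} \<le> f {p}"
    and "\<forall>q\<in>S. f {q} = f {p} \<longrightarrow> p \<le> q"
  shows "tie_fam {X \<in> {X. X \<subseteq> S \<and> sum c X \<le> b}.
                   \<forall>Y\<in>{X. X \<subseteq> S \<and> sum c X \<le> b}. f Y \<le> f X} = {p}"
proof (rule tie_fam_lowest_singleton)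
  let ?feas = "{X. X \<subseteq> S \<and> sum c X \<le> b}"
  have feas: "X \<in> ?feas \<Longrightarrow> X = {} \<or> (\<exists>q\<in>S. X = {q})" for X
    using one_project_budget_subset_singleton[OF assms(1,2)]
    by (metis insert_subset subset_singletonD mem_Collect_eq)
  have "{p} \<in> ?feas" using assms(2,3) by (simp add: one_project_budget_def)
  moreover have "\<forall>Y\<in>?feas. f Y \<le> f {p}" using feas assms(4,5) by blast
  ultimately show "{p} \<in> {X \<in> ?feas. \<forall>Y\<in>?feas. f Y \<le> f X}" by blast
  show "\<forall>P\<in>{X \<in> ?feas. \<forall>Y\<in>?feas. f Y \<le> f X}. \<exists>q. P \<subseteq> {q}" using feas by blast
  show "\<forall>q. {q} \<in> {X \<in> ?feas. \<forall>Y\<in>?feas. f Y \<le> f X} \<longrightarrow> p \<le> q"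
  proof (intro allI impI)
    fix q assume "{q} \<in> {X \<in> ?feas. \<forall>Y\<in>?feas. f Y \<le> f X}"
    then have "q \<in> S" "f {p} \<le> f {q}" using \<open>{p} \<in> ?feas\<close> by auto
    then show "p \<le> q" using assms(5,6) by (metis order.antisym)
  qed
qed

lemma napp_0 [simp]: "napp 0 A p = 0"
  by (simp add: napp_def)

lemma napp_Suc: "napp (Suc n) A p = napp n A p + (if p \<in> A (Suc n) then 1 else 0)"
proof -
  have "{i \<in> {1..Suc n}. p \<in> A i} = {i \<in> {1..n}. p \<in> A i} \<union> (if p \<in> A (Suc n) then {Suc n} else {})"
    by (auto simp: le_Suc_eq)
  then show ?thesis unfolding napp_def by (simp add: card_insert_if)
qed

lemma napp_eq_sum: "napp n A p = (\<Sum>i\<in>{1..n}. if p \<in> A i then 1 else 0)"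
  unfolding napp_def by (simp add: sum.If_cases Int_def conj_commute)

definition approval_rank :: "nat \<Rightarrow> (nat \<Rightarrow> nat set) \<Rightarrow> nat \<Rightarrow> int \<times> nat" where
  "approval_rank n A p = (- int (napp n A p), p)"

lemma approval_rank_le_iff:
  "approval_rank n A p \<le> approval_rank n A q \<longleftrightarrow>
     napp n A q < napp n A p \<or> (napp n A q = napp n A p \<and> p \<le> q)"
  by (auto simp: approval_rank_def)

lemma approval_winner_exists:
  assumes "finite Pc" "Pc \<noteq> {}"
  obtains p where "p \<in> Pc" "\<forall>q\<in>Pc. approval_rank n A p \<le> approval_rank n A q"
proof -
  have "Min (approval_rank n A ` Pc) \<in> approval_rank n A ` Pc" using assms by simp
  then obtain p where "p \<in> Pc" "approval_rank n A p = Min (approval_rank n A ` Pc)" by auto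
  then show thesis using that assms(1) by simp
qed

lemma sort_key_least_first:
  fixes f :: "'a \<Rightarrow> 'b::linorder"
  assumes "p \<in> set xs" and "\<forall>q\<in>set xs. q \<noteq> p \<longrightarrow> f p < f q"
  obtains ys where "sort_key f xs = p # ys"
proof -
  obtain h ys where hys: "sort_key f xs = h # ys"
    using assms(1) by (metis empty_iff list.set(1) neq_Nil_conv set_sort)
  have h: "h \<in> set xs" using hys by (metis list.set_intros(1) set_sort)
  have "h = p"
  proof (rule ccontr)
    assume "h \<noteq> p"
    then have "p \<in> set ys" using hys assms(1) by (metis set_ConsD set_sort)
    then have "f h \<le> f p" using sorted_sort_key[of f xs] hys by simp
    then show False using assms(2) h \<open>h \<noteq> p\<close> by fastforce
  qed
  then show thesis using that hys by blast
qed

lemma greed_aux_one_project: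
  assumes "\<forall>x\<in>set xs. x \<noteq> p \<longrightarrow> B < c p + c x"
  shows "greed_aux c B xs {p} = {p}"
  using assms
proof (induction xs)
  case (Cons x xs)
  then have "(if sum c (insert x {p}) \<le> B then insert x {p} else {p}) = {p}"
    by (cases "x = p") auto
  with Cons show ?case by simp
qed simp

lemma greed_Cons_one_project:
  assumes "c p \<le> B" and "\<forall>x\<in>set xs. x \<noteq> p \<longrightarrow> B < c p + c x"
  shows "greed c B (p # xs) = {p}"
  using assms greed_aux_one_project by (simp add: greed_def)

lemma greedy_approval_one_project:
  assumes "finite Pc" "one_project_budget c B Pc" "p \<in> Pc"
    and "\<forall>q\<in>Pc. approval_rank n A p \<le> approval_rank n A q"
  shows "greedy_approval n c B Pc A = {p}"
proof -
  let ?xs = "sorted_list_of_set Pc"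
  have "\<forall>q\<in>set ?xs. q \<noteq> p \<longrightarrow> approval_rank n A p < approval_rank n A q"
    using assms(1,4) by (auto simp: approval_rank_def)
  then obtain ys where ys: "sort_key (approval_rank n A) ?xs = p # ys"
    using sort_key_least_first assms(1,3) by (metis set_sorted_list_of_set)
  have "set ys \<subseteq> Pc" using ys assms(1) by (metis set_sort set_sorted_list_of_set set_subset_Cons)
  then have "greed c B (p # ys) = {p}"
    using assms(2,3) by (intro greed_Cons_one_project) (auto simp: one_project_budget_def)
  moreover have "greedy_approval n c B Pc A = greed c B (sort_key (approval_rank n A) ?xs)"
    unfolding greedy_approval_def approval_rank_def ..
  ultimately show ?thesis using ys by simp
qed

lemma approval_max_one_project:
  assumes "finite Pc" "one_project_budget c B Pc" "p \<in> Pc"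
    and "\<forall>q\<in>Pc. approval_rank n A p \<le> approval_rank n A q"
  shows "approval_max n c B Pc A = {p}"
  unfolding approval_max_def Let_def
  by (rule tie_fam_argmax_one_project[OF assms(1-3)])
     (use assms(4) in \<open>auto simp: approval_rank_le_iff\<close>)

lemma alloc_rule_one_project:
  assumes "F \<in> {greedy_approval, approval_max}"
    and "finite Pc" "one_project_budget c B Pc" "p \<in> Pc"
    and "\<forall>q\<in>Pc. approval_rank n A p \<le> approval_rank n A q"
  shows "F n c B Pc A = {p}"
  using assms(1) greedy_approval_one_project[OF assms(2-5)] approval_max_one_project[OF assms(2-5)]
  by auto

lemma alloc_rule_one_project_singleton:
  assumes "F \<in> {greedy_approval, approval_max}"
    and "finite Pc" "Pc \<noteq> {}" "one_project_budget c B Pc"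
  shows "\<exists>p. F n c B Pc A = {p}"
proof -
  obtain p where "p \<in> Pc" "\<forall>q\<in>Pc. approval_rank n A p \<le> approval_rank n A q"
    using approval_winner_exists[OF assms(2,3)] .
  then show ?thesis using alloc_rule_one_project[OF assms(1,2,4)] by blast
qed

lemma spref_irrefl: "\<not> spref M c Q X X"
  by (cases M) (auto simp: spref_def)

lemma spref_singleton_iff:
  assumes "0 < c q"
  shows "spref M c {q} Y X \<longleftrightarrow> q \<in> Y \<and> q \<notin> X"
proof -
  have "Z \<inter> {q} = (if q \<in> Z then {q} else {})" for Z by auto
  with assms show ?thesis by (cases M) (auto simp: spref_def)
qed

lemma Fstar_eq_constant_outcome:
  assumes "\<forall>A'\<subseteq>Pc. F n c B Pc (A(i := A')) = X" and "X \<subseteq> Pc" and "finite X"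
  shows "Fstar M F n c B pref i Pc A = X"
proof -
  have "{F n c B Pc (A(i := A')) | A'. A' \<subseteq> Pc} = {X}" using assms(1) by blast
  then have "best_resp M F n c B pref i Pc A = tie_fam (best M c (top c B pref i Pc) {X})"
    by (simp only: best_resp_def)
  also have "best M c (top c B pref i Pc) {X} = {X}" by (auto simp: best_def spref_irrefl)
  also have "tie_fam {X} = X" using assms(3) by (rule tie_fam_singleton)
  finally have "best_resp M F n c B pref i Pc A = X" .
  then show ?thesis using assms(1,2) by (simp add: Fstar_def)
qed

lemma Fstar_eq_top_one_project:
  assumes F: "F \<in> {greedy_approval, approval_max}"
    and "finite Pc" "one_project_budget c B Pc"
    and top: "top c B pref i Pc = {q}" and "0 < c q"
    and "q \<in> Pc" and q_wins: "F n c B Pc (A(i := {q})) = {q}"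
  shows "Fstar M F n c B pref i Pc A = {q}"
proof -
  define Fam where "Fam = {F n c B Pc (A(i := A')) | A'. A' \<subseteq> Pc}"
  have "{q} \<in> Fam" unfolding Fam_def using assms(6) q_wins by blast
  have singleton_outcomes: "\<exists>p. X = {p}" if "X \<in> Fam" for X
    using that alloc_rule_one_project_singleton[OF F assms(2) _ assms(3)] assms(6)
    unfolding Fam_def by blast
  note spref_q = spref_singleton_iff[where c = c and q = q, OF assms(5)]
  have "best M c {q} Fam = {{q}}"
  proof (intro equalityI subsetI)
    fix X assume "X \<in> best M c {q} Fam"
    then have "X \<in> Fam" "q \<in> X" using \<open>{q} \<in> Fam\<close> by (auto simp: best_def spref_q)
    then show "X \<in> {{q}}" using singleton_outcomes by auto
  qed (use \<open>{q} \<in> Fam\<close> in \<open>auto simp: best_def spref_q\<close>)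
  then have "best_resp M F n c B pref i Pc A = {q}"
    by (simp add: best_resp_def top Fam_def[symmetric] tie_fam_singleton)
  then show ?thesis using q_wins by (simp add: Fstar_def)
qed

lemma Fstar_singleton_shortlist:
  assumes "F \<in> {greedy_approval, approval_max}" and "c p \<le> B"
  shows "Fstar M F n c B pref i {p} A = {p}"
proof (rule Fstar_eq_constant_outcome)
  have "one_project_budget c B {p}" using assms(2) by (simp add: one_project_budget_def)
  then show "\<forall>A'\<subseteq>{p}. F n c B {p} (A(i := A')) = {p}"
    using alloc_rule_one_project[OF assms(1)] by simp
qed auto

lemma sum_powers_strict_mono:
  fixes x :: real
  assumes "0 < x" and "t < t'"
  shows "(\<Sum>l\<in>{0..t}. x ^ l) < (\<Sum>l\<in>{0..t'}. x ^ l)"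
  by (rule sum_strict_mono2[of "{0..t'}" "{0..t}" t']) (use assms in auto)

lemma sum_powers_mono:
  fixes x :: real
  assumes "0 \<le> x" and "t \<le> t'"
  shows "(\<Sum>l\<in>{0..t}. x ^ l) \<le> (\<Sum>l\<in>{0..t'}. x ^ l)"
  by (rule sum_mono2) (use assms in auto)

lemma eqrep_score_less:
  assumes "1 \<le> n" "finite U" "P \<subseteq> U" "j \<in> {1..n}" "x \<in> Ps j \<inter> U - P"
  shows "eqrep_score n Ps P < eqrep_score n Ps U"
  unfolding eqrep_score_def
proof (rule sum_strict_mono_ex1)
  have "card (Ps i \<inter> P) \<le> card (Ps i \<inter> U)" for i
    using assms(2,3) by (intro card_mono) auto
  then show "\<forall>i\<in>{1..n}. (\<Sum>l\<in>{0..card (Ps i \<inter> P)}. (1 / real n) ^ l)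
      \<le> (\<Sum>l\<in>{0..card (Ps i \<inter> U)}. (1 / real n) ^ l)"
    by (simp add: sum_powers_mono)
  have "card (Ps j \<inter> P) < card (Ps j \<inter> U)"
    using assms(2,3,5) by (intro psubset_card_mono) auto
  then show "\<exists>i\<in>{1..n}. (\<Sum>l\<in>{0..card (Ps i \<inter> P)}. (1 / real n) ^ l)
      < (\<Sum>l\<in>{0..card (Ps i \<inter> U)}. (1 / real n) ^ l)"
    using assms(1,4) by (intro bexI[of _ j] sum_powers_strict_mono) auto
qed simp

lemma shortlist_R_eq_union:
  assumes "1 \<le> n" and "finite (\<Union>i\<in>{1..n}. Ps i)" and "sum c (\<Union>i\<in>{1..n}. Ps i) \<le> k * B"
  shows "shortlist_R k n c B Ps = (\<Union>i\<in>{1..n}. Ps i)"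
proof -
  define U where "U = (\<Union>i\<in>{1..n}. Ps i)"
  define feas where "feas = {P. P \<subseteq> U \<and> sum c P \<le> k * B}"
  have less: "eqrep_score n Ps P < eqrep_score n Ps U" if P: "P \<subseteq> U" "P \<noteq> U" for P
  proof -
    obtain x where "x \<in> U - P" using P by blast
    then obtain j where "j \<in> {1..n}" "x \<in> Ps j" unfolding U_def by blast
    then show ?thesis
      using eqrep_score_less assms(1,2) P(1) \<open>x \<in> U - P\<close> unfolding U_def by blast
  qed
  have "U \<in> feas" using assms(3) unfolding feas_def U_def by simp
  have "{P \<in> feas. \<forall>P'\<in>feas. eqrep_score n Ps P' \<le> eqrep_score n Ps P} = {U}"
  proof (intro equalityI subsetI)
    fix P assume "P \<in> {P \<in> feas. \<forall>P'\<in>feas. eqrep_score n Ps P' \<le> eqrep_score n Ps P}"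
    then have "P \<subseteq> U" "eqrep_score n Ps U \<le> eqrep_score n Ps P"
      using \<open>U \<in> feas\<close> by (auto simp: feas_def)
    then show "P \<in> {U}" using less by (metis not_le singletonI)
  qed (use \<open>U \<in> feas\<close> less in \<open>auto simp: feas_def intro: less_imp_le\<close>)
  then show ?thesis
    using tie_fam_singleton assms(2) unfolding shortlist_R_def Let_def U_def[symmetric] feas_def[symmetric]
    by (simp add: U_def)
qed

lemma eqrep_score_empty: "eqrep_score n Ps {} = n"
  by (simp add: eqrep_score_def)

lemma eqrep_score_singleton: "eqrep_score n Ps {p} = n + napp n Ps p / n"
proof -
  have "card (Ps i \<inter> {p}) = (if p \<in> Ps i then 1 else 0)" for i by auto
  then have "eqrep_score n Ps {p} = (\<Sum>i\<in>{1..n}. 1 + (if p \<in> Ps i then 1 / real n else 0))"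
    unfolding eqrep_score_def by (intro sum.cong) auto
  also have "\<dots> = n + (\<Sum>i\<in>{1..n}. if p \<in> Ps i then 1 / real n else 0)"
    by (simp add: sum.distrib)
  also have "(\<Sum>i\<in>{1..n}. if p \<in> Ps i then 1 / real n else 0) = napp n Ps p / n"
    unfolding napp_eq_sum of_nat_sum sum_divide_distrib by (intro sum.cong) auto
  finally show ?thesis .
qed

lemma shortlist_R_one_project:
  assumes "1 \<le> n" and "finite (\<Union>i\<in>{1..n}. Ps i)"
    and "one_project_budget c (k * B) (\<Union>i\<in>{1..n}. Ps i)"
    and "p \<in> (\<Union>i\<in>{1..n}. Ps i)"
    and "\<forall>q\<in>(\<Union>i\<in>{1..n}. Ps i). approval_rank n Ps p \<le> approval_rank n Ps q"
  shows "shortlist_R k n c B Ps = {p}"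
  unfolding shortlist_R_def Let_def
proof (rule tie_fam_argmax_one_project[OF assms(2-4)])
  have n: "0 < real n" using assms(1) by simp
  show "eqrep_score n Ps {} \<le> eqrep_score n Ps {p}"
    by (simp add: eqrep_score_empty eqrep_score_singleton)
  show "\<forall>q\<in>(\<Union>i\<in>{1..n}. Ps i). eqrep_score n Ps {q} \<le> eqrep_score n Ps {p}"
    using assms(5) n by (force simp: eqrep_score_singleton approval_rank_le_iff intro!: divide_right_mono)
  show "\<forall>q\<in>(\<Union>i\<in>{1..n}. Ps i). eqrep_score n Ps {q} = eqrep_score n Ps {p} \<longrightarrow> p \<le> q"
  proof (intro ballI impI)
    fix q assume q: "q \<in> (\<Union>i\<in>{1..n}. Ps i)" "eqrep_score n Ps {q} = eqrep_score n Ps {p}"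
    then have "napp n Ps q = napp n Ps p" using n by (simp add: eqrep_score_singleton)
    moreover have "approval_rank n Ps p \<le> approval_rank n Ps q" using assms(5) q(1) by blast
    ultimately show "p \<le> q" by (simp add: approval_rank_le_iff)
  qed
qed

lemma U_FSSP_AD:
  assumes "U_FSSP_A M k F"
    and "1 \<le> B" "\<forall>p\<in>{1..m}. 1 \<le> c p \<and> c p \<le> B"
    and "\<forall>j\<in>{1..n}. distinct (pref j) \<and> set (pref j) = {1..m}"
    and "\<forall>j\<in>{1..n}. C j \<subseteq> {1..m} \<and> Ps j \<subseteq> C j" and "i \<in> {1..n}"
    and "Pi' \<subseteq> C i \<union> (\<Union>j\<in>{1..n}. Ps j)"
  shows "\<not> successful_antic M k F n c B pref i
           (Ps(i := top c B pref i (C i \<union> (\<Union>j\<in>{1..n}. Ps j)))) Pi'"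
  using assms unfolding U_FSSP_A_def by blast

lemma not_U_FSSP_A_k_eq_1:
  assumes F: "F \<in> {greedy_approval, approval_max}"
  shows "\<not> U_FSSP_A M 1 F"
proof -
  define c :: "nat \<Rightarrow> nat" where "c = (\<lambda>_. 1)"
  define pref :: "nat \<Rightarrow> nat list" where "pref j = (if j = 1 then [3, 1, 2] else [2, 1, 3])" for j
  define C :: "nat \<Rightarrow> nat set" where "C j = (if j = 1 then {1, 3} else {2})" for j
  define Ps :: "nat \<Rightarrow> nat set" where "Ps j = (if j = 1 then {} else {2})" for j
  have two: "{1..2::nat} = {1, 2}" by auto
  have nominees: "(\<Union>j\<in>{1..2}. (Ps(1 := X)) j) = insert 2 X" for X
    unfolding two by (auto simp: Ps_def)
  have truthful: "top c 1 pref 1 (C 1 \<union> (\<Union>j\<in>{1..2}. Ps j)) = {3}"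
    using nominees[of "{}"] by (simp add: top_def greed_def pref_def C_def c_def)
  have napp2: "napp 2 A p = (if p \<in> A 1 then 1 else 0) + (if p \<in> A 2 then 1 else 0)" for A p
    by (simp add: napp_Suc numeral_eq_Suc)
  have shortlist: "shortlist_R 1 2 c 1 (Ps(1 := {q})) = {min 2 q}" if "q \<noteq> 2" for q
    using that by (rule_tac shortlist_R_one_project; (unfold nominees)?)
      (auto simp: one_project_budget_def c_def approval_rank_le_iff napp2 Ps_def min_def)
  have "shortlist_R 1 2 c 1 (Ps(1 := {3})) = {2}" using shortlist[of 3] by simp
  moreover have "shortlist_R 1 2 c 1 (Ps(1 := {3}, 1 := {1})) = {1}" using shortlist[of 1] by simp
  moreover have "top c 1 pref 1 ({2} \<union> {1}) = {1}"
    by (simp add: top_def greed_def pref_def c_def)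
  moreover have "spref M c {1} {1} {2}"
    by (simp add: spref_singleton_iff c_def)
  ultimately have "successful_antic M 1 F 2 c 1 pref 1 (Ps(1 := {3})) {1}"
    using Fstar_singleton_shortlist[OF F] by (simp add: successful_antic_def c_def)
  moreover have "{1} \<subseteq> C 1 \<union> (\<Union>j\<in>{1..2}. Ps j)" by (simp add: C_def)
  moreover have "\<forall>j\<in>{1..2}. distinct (pref j) \<and> set (pref j) = {1..3}"
    "\<forall>j\<in>{1..2}. C j \<subseteq> {1..3} \<and> Ps j \<subseteq> C j"
    by (auto simp: pref_def C_def Ps_def)
  ultimately show ?thesis
    using U_FSSP_AD[where m = 3 and n = 2 and c = c and B = 1 and pref = pref and C = C and Ps = Ps
        and i = 1 and Pi' = "{1}"]
    unfolding truthful by (auto simp: c_def)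
qed

lemma not_U_FSSP_A_k_ge_2:
  assumes k: "2 \<le> k" and F: "F \<in> {greedy_approval, approval_max}"
  shows "\<not> U_FSSP_A M k F"
proof -
  define c :: "nat \<Rightarrow> nat" where "c = (\<lambda>_. 2)"
  define pref :: "nat \<Rightarrow> nat list"
    where "pref j = (if j = 1 then [1, 2, 3] else if j = 2 then [3, 2, 1] else [2, 1, 3])" for j
  define C :: "nat \<Rightarrow> nat set" where "C j = (if j = 1 then {1, 3} else {2})" for j
  define Ps :: "nat \<Rightarrow> nat set" where "Ps j = (if j = 1 then {} else {2})" for j
  have three: "{1..3::nat} = {1, 2, 3}" by auto
  have nominees: "(\<Union>j\<in>{1..3}. (Ps(1 := X)) j) = insert 2 X" for X
    unfolding three by (auto simp: Ps_def)
  have shortlist: "shortlist_R k 3 c 3 (Ps(1 := X)) = insert 2 X" if "X \<subseteq> {1, 3}" for X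
  proof -
    have "card (insert 2 X) \<le> card {1, 2, 3 :: nat}" using that by (intro card_mono) auto
    then have "sum c (insert 2 X) \<le> 6" by (simp add: c_def)
    with k that have "shortlist_R k 3 c 3 (Ps(1 := X)) = (\<Union>j\<in>{1..3}. (Ps(1 := X)) j)"
      by (rule_tac shortlist_R_eq_union; (unfold nominees)?) (auto intro: finite_subset)
    then show ?thesis unfolding nominees .
  qed
  have truthful: "top c 3 pref 1 (C 1 \<union> (\<Union>j\<in>{1..3}. Ps j)) = {1}"
    using nominees[of "{}"] by (simp add: top_def greed_def pref_def C_def c_def)
  have napp3: "napp 3 A p = (if p \<in> A 1 then 1 else 0) + (if p \<in> A 2 then 1 else 0)
      + (if p \<in> A 3 then 1 else 0)" for A p
    by (simp add: napp_Suc numeral_eq_Suc)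
  have "Fstar M F 3 c 3 pref 1 {1, 2} (\<lambda>j. top c 3 pref j {1, 2}) = {2}"
    by (intro Fstar_eq_constant_outcome allI impI alloc_rule_one_project[OF F])
       (auto simp: one_project_budget_def approval_rank_le_iff napp3 top_def greed_def pref_def c_def)
  moreover have "Fstar M F 3 c 3 pref 1 {1, 2, 3} (\<lambda>j. top c 3 pref j {1, 2, 3}) = {1}"
    by (intro Fstar_eq_top_one_project[OF F] alloc_rule_one_project[OF F])
       (auto simp: one_project_budget_def approval_rank_le_iff napp3 top_def greed_def pref_def c_def)
  moreover have "top c 3 pref 1 ({1, 2} \<union> {1, 2, 3}) = {1}"
    by (simp add: top_def greed_def pref_def c_def)
  moreover have "spref M c {1} {1} {2}"
    by (simp add: spref_singleton_iff c_def)
  ultimately have "successful_antic M k F 3 c 3 pref 1 (Ps(1 := {1})) {1, 3}"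
    using shortlist[of "{1}"] shortlist[of "{1, 3}"]
    by (simp add: successful_antic_def insert_commute)
  moreover have "\<forall>j\<in>{1..3}. distinct (pref j) \<and> set (pref j) = {1..3}"
    "\<forall>j\<in>{1..3}. C j \<subseteq> {1..3} \<and> Ps j \<subseteq> C j"
    by (auto simp: three pref_def C_def Ps_def)
  ultimately show ?thesis
    using U_FSSP_AD[where m = 3 and n = 3 and c = c and B = 3 and pref = pref and C = C and Ps = Ps
        and i = 1 and Pi' = "{1, 3}"]
    unfolding truthful by (auto simp: c_def C_def)
qed

theorem fact2:
  fixes M :: pmodel and k :: nat and F :: alloc_rule
  assumes "1 \<le> k"
    and "F \<in> {greedy_approval, approval_max}"
  shows "\<not> U_FSSP_A M k F"
proof (cases "k = 1")
  case True
  then show ?thesis using not_U_FSSP_A_k_eq_1[OF assms(2)] by simp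
next
  case False
  with assms(1) have "2 \<le> k" by simp
  then show ?thesis using not_U_FSSP_A_k_ge_2[OF _ assms(2)] by simp
qed

end
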